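(* Let $F_n$ denote the number of leaves of the binary search tree $\mathbb{T}_n$ lying at generation $H_n$ (the size of the fringe). Then $\limsup_{n\to\infty}F_n=\infty$ almost surely.
   Context: Let $\mathbb{T}$ be the complete rooted binary tree. The binary search tree is the random sequence of subtrees $(\mathbb{T}_n)_{n\ge1}$ defined recursively: $\mathbb{T}_1$ consists only of the root; given $\mathbb{T}_n$, a leaf $u$ of $\mathbb{T}_n$ is chosen uniformly at random among all leaves of $\mathbb{T}_n$, and $\mathbb{T}_{n+1}$ is $\mathbb{T}_n$ together with the two children of $u$. The generation of a node is its distance from the root (root has generation $0$); the height $H_n$ is the greatest generation of a node of $\mathbb{T}_n$. *)

theory Defs
  imports "HOL-Probability.Probability" "HOL-Library.List_Lexorder"
begin

text \<open>Nodes of the complete rooted binary tree are encoded as finite words over bool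
  (the root is the empty word, the children of u are u@[False] and u@[True]);
  the generation of a node is its length.\<close>

definition leaves :: "bool list set \<Rightarrow> bool list set" where
  "leaves T = {u \<in> T. u @ [False] \<notin> T \<and> u @ [True] \<notin> T}"

definition height :: "bool list set \<Rightarrow> nat" where
  "height T = Max (length ` T)"

definition fringe :: "bool list set \<Rightarrow> nat" where
  "fringe T = card {u \<in> leaves T. length u = height T}"

text \<open>Construction of the binary search tree from a sequence v of choices:
  grow v n is the tree T_(n+1), which has exactly n+1 leaves; the leaf that is split
  at this step is the (v n)-th leaf in lexicographic order. When v n is uniform on
  {0..<n+1} and independent of the past, the split leaf is uniform among the leaves.\<close>

fun grow :: "(nat \<Rightarrow> nat) \<Rightarrow> nat \<Rightarrow> bool list set" where
  "grow v 0 = {[]}"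
| "grow v (Suc n) =
     (let T = grow v n; u = sorted_list_of_set (leaves T) ! v n
      in T \<union> {u @ [False], u @ [True]})"

text \<open>The binary search tree T_n, n \<ge> 1 (T_0 is set equal to T_1 by convention).\<close>
definition bst :: "(nat \<Rightarrow> nat) \<Rightarrow> nat \<Rightarrow> bool list set" where
  "bst v n = grow v (n - 1)"

definition choice_space :: "(nat \<Rightarrow> nat) measure" where
  "choice_space = PiM UNIV (\<lambda>n. measure_pmf (pmf_of_set {0..<Suc n}))"

end

theory Submission
  imports Defs
begin

(* Fix k >= 1 and call a leaf "inner" if its generation is below the height. The quantity
     potential k T = k * (k - F(T)) + (H(T) - 1 - g(T)),   g(T) = deepest generation of an inner leaf,
   measures how far T is from having fringe >= k. As long as F(T) < k <= H(T), splitting an inner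
   leaf never increases the potential (unless the fringe jumps to k), splitting the deepest inner
   leaf (the "target") strictly decreases it, and the potential never exceeds k * k + k.
   Splitting a top leaf is the only bad event; at time s at most k of the s + 1 leaves are top leaves.
   A two-parameter recursion hit_bound turns this into an explicit lower bound: from any history
   at a time t >= start_time k, the fringe reaches k before time 2t with probability at least
   hit_margin k > 0 (lemma hit_prob_ge_margin).

   On the doubling intervals [N 2^r, N 2^(r+1)] the failure probabilities multiply, so the event
   "fringe < k from time N on" is null; a countable union over k and N gives the theorem. *)

definition split_leaf :: "bool list set \<Rightarrow> bool list \<Rightarrow> bool list set" where
  "split_leaf T u = T \<union> {u @ [False], u @ [True]}"

lemma grow_Suc_split:
  "grow v (Suc n) = split_leaf (grow v n) (sorted_list_of_set (leaves (grow v n)) ! v n)"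
  by (simp add: Let_def split_leaf_def)

definition binary_tree :: "bool list set \<Rightarrow> bool" where
  "binary_tree T \<longleftrightarrow> finite T \<and> [] \<in> T \<and> (\<forall>u b. u @ [b] \<in> T \<longrightarrow> u \<in> T)
     \<and> (\<forall>u. u @ [False] \<in> T \<longleftrightarrow> u @ [True] \<in> T)"

lemma binary_tree_prefix:
  assumes "binary_tree T" "x @ y \<in> T"
  shows "x \<in> T"
  using assms(2)
proof (induction y rule: rev_induct)
  case Nil then show ?case by simp
next
  case (snoc b y) then show ?case using assms(1) unfolding binary_tree_def
    by (metis append_assoc)
qed

lemma finite_leaves: "finite T \<Longrightarrow> finite (leaves T)"
  by (simp add: leaves_def)

lemma leaves_split_leaf:
  assumes "binary_tree T" "u \<in> leaves T"
  shows "leaves (split_leaf T u) = leaves T - {u} \<union> {u @ [False], u @ [True]}"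
proof -
  have uT: "u \<in> T" "u @ [False] \<notin> T" "u @ [True] \<notin> T"
    using assms(2) by (auto simp: leaves_def)
  have parent: "\<And>x b. x @ [b] \<in> T \<Longrightarrow> x \<in> T" using assms(1) by (auto simp: binary_tree_def)
  show ?thesis
  proof (intro set_eqI iffI)
    fix x assume "x \<in> leaves (split_leaf T u)"
    then show "x \<in> leaves T - {u} \<union> {u @ [False], u @ [True]}"
      by (auto simp: leaves_def split_leaf_def)
  next
    fix x assume x: "x \<in> leaves T - {u} \<union> {u @ [False], u @ [True]}"
    show "x \<in> leaves (split_leaf T u)"
    proof (cases "x \<in> {u @ [False], u @ [True]}")
      case True
      then have "x @ [b] \<notin> T" for b using uT parent[of x b] by auto
      moreover have "x @ [b] \<noteq> u @ [c]" for b c using True by auto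
      ultimately show ?thesis using True by (auto simp: leaves_def split_leaf_def)
    next
      case False
      then have "x \<in> leaves T" "x \<noteq> u" using x by auto
      then show ?thesis by (auto simp: leaves_def split_leaf_def)
    qed
  qed
qed

lemma binary_tree_split_leaf:
  assumes "binary_tree T" "u \<in> leaves T"
  shows "binary_tree (split_leaf T u)"
  using assms unfolding binary_tree_def split_leaf_def leaves_def by auto

lemma card_leaves_split_leaf:
  assumes "binary_tree T" "u \<in> leaves T"
  shows "card (leaves (split_leaf T u)) = Suc (card (leaves T))"
proof -
  have fin: "finite (leaves T)" using assms(1) by (simp add: binary_tree_def finite_leaves)
  have new: "u @ [False] \<notin> leaves T" "u @ [True] \<notin> leaves T"
    using assms(2) by (auto simp: leaves_def)
  have "card (leaves T - {u} \<union> {u @ [False], u @ [True]}) = card (leaves T - {u}) + 2"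
    using fin new by (subst card_Un_disjoint) auto
  also have "\<dots> = Suc (card (leaves T))" using fin assms(2)
    by (simp add: card_Diff_singleton) (metis Suc_pred card_gt_0_iff emptyE)
  finally show ?thesis using leaves_split_leaf[OF assms] by simp
qed

definition admissible :: "(nat \<Rightarrow> nat) \<Rightarrow> nat \<Rightarrow> bool" where
  "admissible w n \<longleftrightarrow> (\<forall>i<n. w i \<le> i)"

lemma grow_binary_tree:
  "admissible w n \<Longrightarrow> binary_tree (grow w n) \<and> card (leaves (grow w n)) = Suc n"
proof (induction n)
  case 0
  then show ?case by (auto simp: binary_tree_def leaves_def)
next
  case (Suc n)
  let ?T = "grow w n"
  let ?xs = "sorted_list_of_set (leaves ?T)"
  have IH: "binary_tree ?T" "card (leaves ?T) = Suc n" using Suc by (auto simp: admissible_def)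
  have fin: "finite (leaves ?T)" using IH by (simp add: binary_tree_def finite_leaves)
  have "w n < length ?xs" using Suc.prems IH fin by (auto simp: admissible_def le_imp_less_Suc)
  then have leaf: "?xs ! w n \<in> leaves ?T" using fin by (metis nth_mem set_sorted_list_of_set)
  show ?case unfolding grow_Suc_split
    using binary_tree_split_leaf[OF IH(1) leaf] card_leaves_split_leaf[OF IH(1) leaf] IH by simp
qed

lemma grow_cong: "(\<And>i. i < n \<Longrightarrow> v i = v' i) \<Longrightarrow> grow v n = grow v' n"
  by (induction n) (auto simp: Let_def)

lemma grow_choice_update:
  "grow (w(s := y)) (Suc s) = split_leaf (grow w s) (sorted_list_of_set (leaves (grow w s)) ! y)"
proof -
  have "grow (w(s := y)) s = grow w s" by (rule grow_cong) simp
  then show ?thesis unfolding grow_Suc_split[of "w(s := y)" s] by simp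
qed


lemma height_ge: "finite T \<Longrightarrow> u \<in> T \<Longrightarrow> length u \<le> height T"
  unfolding height_def by simp

lemma height_attained: "finite T \<Longrightarrow> T \<noteq> {} \<Longrightarrow> \<exists>u\<in>T. length u = height T"
proof -
  assume "finite T" "T \<noteq> {}"
  then have "height T \<in> length ` T" unfolding height_def by (intro Max_in) auto
  then show ?thesis by auto
qed

lemma height_mono: "finite T' \<Longrightarrow> T \<subseteq> T' \<Longrightarrow> T \<noteq> {} \<Longrightarrow> height T \<le> height T'"
  unfolding height_def by (rule Max_mono) auto

definition top_leaves :: "bool list set \<Rightarrow> bool list set" where
  "top_leaves T = {u \<in> leaves T. length u = height T}"

lemma fringe_eq_card_top_leaves: "fringe T = card (top_leaves T)"
  by (simp add: fringe_def top_leaves_def)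

lemma top_leaves_eq:
  assumes "binary_tree T"
  shows "top_leaves T = {u \<in> T. length u = height T}"
proof -
  have fin: "finite T" using assms by (simp add: binary_tree_def)
  have "u @ [b] \<notin> T" if "u \<in> T" "length u = height T" for u b
    using height_ge[OF fin, of "u @ [b]"] that by auto
  then show ?thesis unfolding top_leaves_def leaves_def by auto
qed

lemma finite_top_leaves: "binary_tree T \<Longrightarrow> finite (top_leaves T)"
  by (simp add: top_leaves_def binary_tree_def finite_leaves)

lemma height_split_leaf:
  assumes "binary_tree T" "u \<in> leaves T" "length u < height T"
  shows "height (split_leaf T u) = height T"
proof -
  have fin: "finite T" using assms by (simp add: binary_tree_def)
  have uT: "u \<in> T" using assms(2) by (simp add: leaves_def)
  obtain x where x: "x \<in> T" "length x = height T" using height_attained[OF fin] uT by blast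
  show ?thesis unfolding height_def[of "split_leaf T u"]
  proof (rule Max_eqI)
    show "finite (length ` split_leaf T u)" using fin by (simp add: split_leaf_def)
    show "y \<le> height T" if "y \<in> length ` split_leaf T u" for y
      using that height_ge[OF fin] assms(3) by (auto simp: split_leaf_def)
    show "height T \<in> length ` split_leaf T u" using x unfolding split_leaf_def by (metis UnI1 image_eqI)
  qed
qed

lemma top_leaves_split_leaf:
  assumes "binary_tree T" "u \<in> leaves T" "length u < height T"
  shows "top_leaves (split_leaf T u) =
    top_leaves T \<union> (if Suc (length u) = height T then {u @ [False], u @ [True]} else {})"
proof -
  have "top_leaves (split_leaf T u) = {x \<in> split_leaf T u. length x = height T}"
    unfolding top_leaves_eq[OF binary_tree_split_leaf[OF assms(1,2)]] height_split_leaf[OF assms] ..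
  also have "\<dots> = {x \<in> T. length x = height T} \<union>
      (if Suc (length u) = height T then {u @ [False], u @ [True]} else {})"
    unfolding split_leaf_def by auto
  finally show ?thesis unfolding top_leaves_eq[OF assms(1)] .
qed

lemma fringe_split_leaf:
  assumes "binary_tree T" "u \<in> leaves T" "length u < height T"
  shows "fringe (split_leaf T u) = fringe T + (if Suc (length u) = height T then 2 else 0)"
proof -
  have new: "u @ [False] \<notin> top_leaves T" "u @ [True] \<notin> top_leaves T"
    using assms(2) by (auto simp: top_leaves_def leaves_def)
  then show ?thesis
    unfolding fringe_eq_card_top_leaves top_leaves_split_leaf[OF assms]
    using finite_top_leaves[OF assms(1)] by (simp add: card_Un_disjoint)
qed

text \<open>If fewer than 2^k nodes sit at the top generation, then some leaf lies within the last
  k generations below the top: otherwise the full binary subtree of depth k below the ancestor of a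
  top node at generation height - k would give 2^k top nodes.\<close>
lemma shallow_leaf_near_top:
  assumes "binary_tree T" "k \<le> height T" "fringe T < 2 ^ k"
  shows "\<exists>l\<in>leaves T. height T - k \<le> length l \<and> length l < height T"
proof (rule ccontr)
  assume none: "\<not> ?thesis"
  have fin: "finite T" and root: "[] \<in> T" using assms(1) by (auto simp: binary_tree_def)
  obtain u where u: "u \<in> T" "length u = height T" using height_attained[OF fin] root by blast
  define a where "a = take (height T - k) u"
  have aT: "a \<in> T" using binary_tree_prefix[OF assms(1), of a "drop (height T - k) u"] u(1)
    by (simp add: a_def)
  have len_a: "length a = height T - k" using u(2) by (simp add: a_def)
  have sibling: "x @ [False] \<in> T \<longleftrightarrow> x @ [True] \<in> T" for x
    using assms(1) by (simp add: binary_tree_def)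
  have full: "length z \<le> k \<Longrightarrow> a @ z \<in> T" for z
  proof (induction z rule: rev_induct)
    case Nil then show ?case using aT by simp
  next
    case (snoc b z)
    then have az: "a @ z \<in> T" by simp
    have "length (a @ z) < height T" "height T - k \<le> length (a @ z)"
      using snoc.prems len_a assms(2) by auto
    then have "a @ z \<notin> leaves T" using none az by blast
    then have "(a @ z) @ [False] \<in> T \<or> (a @ z) @ [True] \<in> T" using az by (auto simp: leaves_def)
    then have "(a @ z) @ [b] \<in> T" using sibling[of "a @ z"] by (cases b) auto
    then show ?case by simp
  qed
  have sub: "(\<lambda>z. a @ z) ` {z. set z \<subseteq> UNIV \<and> length z = k} \<subseteq> top_leaves T"
    using full len_a assms(2) top_leaves_eq[OF assms(1)] by auto
  have "card ((\<lambda>z. a @ z) ` {z. set z \<subseteq> (UNIV::bool set) \<and> length z = k}) = 2 ^ k"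
    using card_lists_length_eq[of "UNIV::bool set" k] by (subst card_image) (auto simp: inj_on_def)
  then have "2 ^ k \<le> fringe T" unfolding fringe_eq_card_top_leaves
    using card_mono[OF finite_top_leaves[OF assms(1)] sub] by simp
  then show False using assms(3) by simp
qed

lemma card_lt_height:
  assumes "binary_tree T"
  shows "card T < 2 ^ Suc (height T)"
proof -
  have fin: "finite T" using assms by (simp add: binary_tree_def)
  have sub: "T \<subseteq> {xs. set xs \<subseteq> (UNIV::bool set) \<and> length xs \<le> height T}"
    using height_ge[OF fin] by auto
  have count: "card {xs::bool list. length xs \<le> n} = (\<Sum>i\<le>n. 2 ^ i)" for n
    using card_lists_length_le[of "UNIV::bool set" n] by simp
  have "card T \<le> (\<Sum>i\<le>height T. 2 ^ i)"
    using card_mono[OF finite_lists_length_le[of "UNIV::bool set"] sub] count by simp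
  also have "(\<Sum>i\<le>n. (2::nat) ^ i) < 2 ^ Suc n" for n by (induction n) auto
  finally show ?thesis .
qed

lemma height_ge_of_leaves:
  assumes "binary_tree T" "2 ^ Suc k \<le> card (leaves T)"
  shows "k \<le> height T"
proof -
  have "card (leaves T) \<le> card T"
    using assms(1) by (intro card_mono) (auto simp: binary_tree_def leaves_def)
  then have "(2::nat) ^ Suc k < 2 ^ Suc (height T)" using card_lt_height[OF assms(1)] assms(2) by linarith
  then show ?thesis by simp
qed

definition inner_leaves :: "bool list set \<Rightarrow> bool list set" where
  "inner_leaves T = {l \<in> leaves T. length l < height T}"

definition inner_depth :: "bool list set \<Rightarrow> nat" where
  "inner_depth T = Max (length ` inner_leaves T)"

definition target_leaf :: "bool list set \<Rightarrow> bool list" where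
  "target_leaf T = (SOME l. l \<in> inner_leaves T \<and> length l = inner_depth T)"

definition potential :: "nat \<Rightarrow> bool list set \<Rightarrow> nat" where
  "potential k T = k * (k - fringe T) + (height T - 1 - inner_depth T)"

lemma finite_inner_leaves: "binary_tree T \<Longrightarrow> finite (inner_leaves T)"
  by (simp add: inner_leaves_def binary_tree_def finite_leaves)

lemma inner_depth_ge: "binary_tree T \<Longrightarrow> x \<in> inner_leaves T \<Longrightarrow> length x \<le> inner_depth T"
  unfolding inner_depth_def using finite_inner_leaves by simp

lemma target_leaf:
  assumes "binary_tree T" "inner_leaves T \<noteq> {}"
  shows "target_leaf T \<in> inner_leaves T" "length (target_leaf T) = inner_depth T"
proof -
  have "inner_depth T \<in> length ` inner_leaves T"
    unfolding inner_depth_def using assms finite_inner_leaves by (intro Max_in) auto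
  then have "\<exists>l. l \<in> inner_leaves T \<and> length l = inner_depth T" by auto
  then have "target_leaf T \<in> inner_leaves T \<and> length (target_leaf T) = inner_depth T"
    unfolding target_leaf_def by (rule someI_ex)
  then show "target_leaf T \<in> inner_leaves T" "length (target_leaf T) = inner_depth T" by auto
qed

lemma inner_depth_near_top:
  assumes "binary_tree T" "k \<le> height T" "fringe T < 2 ^ k"
  shows "inner_leaves T \<noteq> {}" "height T - k \<le> inner_depth T" "inner_depth T < height T"
proof -
  obtain l where l: "l \<in> leaves T" "height T - k \<le> length l" "length l < height T"
    using shallow_leaf_near_top[OF assms] by blast
  then have inner: "l \<in> inner_leaves T" by (simp add: inner_leaves_def)
  then show "inner_leaves T \<noteq> {}" by blast
  show "height T - k \<le> inner_depth T" using l(2) inner_depth_ge[OF assms(1) inner] by linarith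
  show "inner_depth T < height T"
    using target_leaf[OF assms(1)] inner by (force simp: inner_leaves_def)
qed

lemma card_inner_leaves:
  assumes "binary_tree T"
  shows "card (inner_leaves T) + fringe T = card (leaves T)"
proof -
  have "length x \<le> height T" if "x \<in> leaves T" for x
    using that height_ge assms by (auto simp: leaves_def binary_tree_def)
  then have "leaves T = inner_leaves T \<union> top_leaves T"
    by (auto simp: inner_leaves_def top_leaves_def) (meson le_neq_implies_less)
  moreover have "inner_leaves T \<inter> top_leaves T = {}" by (auto simp: inner_leaves_def top_leaves_def)
  ultimately show ?thesis
    using finite_inner_leaves[OF assms] finite_top_leaves[OF assms]
    by (simp add: card_Un_disjoint fringe_eq_card_top_leaves)
qed

lemma inner_leaves_split_leaf:
  assumes "binary_tree T" "l \<in> inner_leaves T" "Suc (length l) < height T"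
  shows "inner_leaves (split_leaf T l) = inner_leaves T - {l} \<union> {l @ [False], l @ [True]}"
proof -
  have l: "l \<in> leaves T" "length l < height T" using assms(2) by (auto simp: inner_leaves_def)
  show ?thesis unfolding inner_leaves_def leaves_split_leaf[OF assms(1) l(1)] height_split_leaf[OF assms(1) l]
    using assms(3) l by auto
qed

lemma inner_depth_split_leaf:
  assumes tree: "binary_tree T" and l: "l \<in> inner_leaves T" and deep: "Suc (length l) < height T"
  shows "inner_depth T \<le> inner_depth (split_leaf T l)"
    and "l = target_leaf T \<Longrightarrow> inner_depth T < inner_depth (split_leaf T l)"
proof -
  have tree': "binary_tree (split_leaf T l)"
    using binary_tree_split_leaf[OF tree] l by (simp add: inner_leaves_def)
  have inner': "inner_leaves (split_leaf T l) = inner_leaves T - {l} \<union> {l @ [False], l @ [True]}"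
    by (rule inner_leaves_split_leaf[OF tree l deep])
  have "inner_leaves T \<noteq> {}" using l by blast
  note tgt = target_leaf[OF tree this]
  have child: "Suc (length l) \<le> inner_depth (split_leaf T l)"
    using inner_depth_ge[OF tree', of "l @ [False]"] inner' by simp
  show strict: "inner_depth T < inner_depth (split_leaf T l)" if "l = target_leaf T"
    using child tgt(2) l that by auto
  show "inner_depth T \<le> inner_depth (split_leaf T l)"
  proof (cases "l = target_leaf T")
    case False
    then have "target_leaf T \<in> inner_leaves (split_leaf T l)" using inner' tgt(1) l by auto
    then show ?thesis using inner_depth_ge[OF tree'] tgt(2) l by metis
  qed (use strict in simp)
qed

lemma potential_split:
  assumes tree: "binary_tree T" and k1: "1 \<le> k" and kH: "k \<le> height T" and Fk: "fringe T < k"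
    and l: "l \<in> inner_leaves T" and F'k: "fringe (split_leaf T l) < k"
  shows "potential k (split_leaf T l) \<le> potential k T"
    and "l = target_leaf T \<Longrightarrow> potential k (split_leaf T l) < potential k T"
proof -
  let ?T = "split_leaf T l" and ?H = "height T" and ?F = "fringe T"
  have leaf: "l \<in> leaves T" "length l < height T" using l by (auto simp: inner_leaves_def)
  have tree': "binary_tree ?T" using binary_tree_split_leaf[OF tree leaf(1)] .
  have H': "height ?T = ?H" using height_split_leaf[OF tree leaf] .
  have F': "fringe ?T = ?F + (if Suc (length l) = ?H then 2 else 0)" using fringe_split_leaf[OF tree leaf] .
  note near = inner_depth_near_top[OF tree kH order.strict_trans[OF Fk less_exp]]
  note near' = inner_depth_near_top[OF tree' kH[folded H'] order.strict_trans[OF F'k less_exp]]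
  have "potential k ?T \<le> potential k T \<and> (l = target_leaf T \<longrightarrow> potential k ?T < potential k T)"
  proof (cases "Suc (length l) = ?H")
    case True
    then have F2: "fringe ?T = ?F + 2" using F' by simp
    have depth: "height ?T - 1 - inner_depth ?T \<le> k - 1" using near'(2) H' by linarith
    have gap: "k - ?F = (k - (?F + 2)) + 2" using F2 F'k by linarith
    have "potential k ?T \<le> k * (k - (?F + 2)) + (k - 1)" unfolding potential_def F2 using depth by simp
    also have "\<dots> < k * (k - (?F + 2)) + 2 * k" using k1 by simp
    also have "\<dots> = k * (k - ?F)" by (subst gap) (simp add: algebra_simps)
    also have "\<dots> \<le> potential k T" unfolding potential_def by simp
    finally have "potential k ?T < potential k T" .
    then show ?thesis using less_imp_le by blast
  next
    case False
    then have F2: "fringe ?T = ?F" and deep: "Suc (length l) < ?H" using F' leaf(2) by auto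
    note depth = inner_depth_split_leaf[OF tree l deep]
    show ?thesis unfolding potential_def F2 H' using depth near'(3) H' by auto
  qed
  then show "potential k ?T \<le> potential k T"
    and "l = target_leaf T \<Longrightarrow> potential k ?T < potential k T" by auto
qed

lemma potential_pos: "fringe T < k \<Longrightarrow> 1 \<le> potential k T"
  unfolding potential_def by (simp add: Suc_le_eq)

definition potential_cap :: "nat \<Rightarrow> nat" where
  "potential_cap k = k * k + k"

lemma potential_le_cap:
  assumes "binary_tree T" "k \<le> height T" "fringe T < k"
  shows "potential k T \<le> potential_cap k"
proof -
  note near = inner_depth_near_top[OF assms(1,2) order.strict_trans[OF assms(3) less_exp]]
  have "height T - 1 - inner_depth T \<le> k" using near(2) by linarith
  moreover have "k * (k - fringe T) \<le> k * k" by simp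
  ultimately show ?thesis unfolding potential_def potential_cap_def by linarith
qed

text \<open>From time s with horizon E, the
  factor safe_factor bounds the chance of never splitting one of the (at most k) top leaves,
  and progress_prob E d s bounds the chance of d target splits before time E when each step
  hits the target with probability at least 1/E. Their product hit_bound satisfies the same
  one-step recursion inequality as the true hitting probability (see hit_bound_step).\<close>
definition safe_factor :: "nat \<Rightarrow> nat \<Rightarrow> nat \<Rightarrow> real" where
  "safe_factor k E s = ((real s - real k) / real E) ^ k"

fun progress_prob :: "nat \<Rightarrow> nat \<Rightarrow> nat \<Rightarrow> real" where
  "progress_prob E 0 s = 1"
| "progress_prob E (Suc d) s = (\<Sum>r\<in>{s..<E}. progress_prob E d (Suc r)) / real E"

declare progress_prob.simps(2)[simp del]

definition hit_bound :: "nat \<Rightarrow> nat \<Rightarrow> nat \<Rightarrow> nat \<Rightarrow> real" where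
  "hit_bound k E d s = safe_factor k E s * progress_prob E d s"

lemma progress_prob_nonneg: "0 \<le> progress_prob E d s"
  by (induction d arbitrary: s) (auto intro!: sum_nonneg divide_nonneg_nonneg simp: progress_prob.simps)

lemma progress_prob_le1: "progress_prob E d s \<le> 1"
proof (induction d arbitrary: s)
  case 0 then show ?case by simp
next
  case (Suc d)
  have "(\<Sum>r\<in>{s..<E}. progress_prob E d (Suc r)) \<le> (\<Sum>r\<in>{s..<E}. 1)"
    by (rule sum_mono) (use Suc in auto)
  also have "\<dots> \<le> real E" by simp
  finally show ?case by (cases "E = 0") (auto simp: divide_le_eq progress_prob.simps)
qed

lemma progress_prob_Suc_le: "progress_prob E (Suc d) s \<le> progress_prob E d s"
proof (induction d arbitrary: s)
  case 0 then show ?case using progress_prob_le1[of E "Suc 0" s] by simp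
next
  case (Suc d)
  have "(\<Sum>r\<in>{s..<E}. progress_prob E (Suc d) (Suc r)) \<le> (\<Sum>r\<in>{s..<E}. progress_prob E d (Suc r))"
    by (rule sum_mono) (use Suc in auto)
  then show ?case by (simp add: divide_right_mono progress_prob.simps)
qed

lemma progress_prob_antimono: "d \<le> d' \<Longrightarrow> progress_prob E d' s \<le> progress_prob E d s"
  using lift_Suc_antimono_le[of "\<lambda>d. progress_prob E d s"] progress_prob_Suc_le by blast

text \<open>Conditioning on whether the next step makes progress.\<close>
lemma progress_prob_step:
  "s < E \<Longrightarrow> progress_prob E (Suc d) s = progress_prob E d (Suc s) / real E + progress_prob E (Suc d) (Suc s)"
proof -
  assume "s < E"
  then have "{s..<E} = insert s {Suc s..<E}" by auto
  then show ?thesis by (simp add: add_divide_distrib progress_prob.simps)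
qed

lemma progress_prob_base: "progress_prob E (Suc d) E = 0" by (simp add: progress_prob.simps)

text \<open>If d blocks of l consecutive steps fit before the horizon, progress in each block
  has probability at least l / E.\<close>
lemma progress_prob_low: "s + d * l \<le> E \<Longrightarrow> 0 < E \<Longrightarrow> (real l / real E) ^ d \<le> progress_prob E d s"
proof (induction d arbitrary: s)
  case 0 then show ?case by simp
next
  case (Suc d)
  have "(\<Sum>r\<in>{s..<s+l}. (real l / real E) ^ d) \<le> (\<Sum>r\<in>{s..<s+l}. progress_prob E d (Suc r))"
  proof (rule sum_mono)
    fix r assume "r \<in> {s..<s+l}"
    then have "Suc r + d * l \<le> E" using Suc.prems by (auto simp: algebra_simps)
    then show "(real l / real E) ^ d \<le> progress_prob E d (Suc r)" using Suc.IH Suc.prems by blast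
  qed
  also have "\<dots> \<le> (\<Sum>r\<in>{s..<E}. progress_prob E d (Suc r))"
    by (rule sum_mono2) (use Suc.prems in \<open>auto simp: progress_prob_nonneg\<close>)
  finally have S: "real l * (real l / real E) ^ d \<le> (\<Sum>r\<in>{s..<E}. progress_prob E d (Suc r))" by simp
  have "(real l / real E) ^ Suc d = real l * (real l / real E) ^ d / real E" by simp
  then show ?case unfolding progress_prob.simps(2) using divide_right_mono[OF S, of "real E"] by simp
qed

text \<open>A Bernoulli-type inequality behind the recursion for safe_factor.\<close>
lemma shifted_power_bound: "1 \<le> (x::real) \<Longrightarrow> (x - 1) ^ k * (x + real k) \<le> x ^ Suc k"
proof (induction k)
  case 0 then show ?case by simp
next
  case (Suc k)
  have i: "(x - 1) * (x + real (Suc k)) \<le> x * (x + real k)" using Suc.prems by (simp add: algebra_simps)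
  have h0: "0 \<le> (x - 1) ^ k" using Suc.prems by simp
  have "(x - 1) ^ Suc k * (x + real (Suc k)) = (x - 1) ^ k * ((x - 1) * (x + real (Suc k)))"
    by (simp add: algebra_simps)
  also have "\<dots> \<le> (x - 1) ^ k * (x * (x + real k))" by (rule mult_left_mono[OF i h0])
  also have "\<dots> = x * ((x - 1) ^ k * (x + real k))" by (simp add: algebra_simps)
  also have "\<dots> \<le> x * x ^ Suc k" using Suc by (intro mult_left_mono) auto
  finally show ?case by simp
qed

lemma safe_factor_nonneg: "k \<le> s \<Longrightarrow> 0 \<le> safe_factor k E s"
  by (simp add: safe_factor_def)

lemma safe_factor_le1: "k \<le> s \<Longrightarrow> s \<le> E \<Longrightarrow> safe_factor k E s \<le> 1"
  unfolding safe_factor_def by (rule power_le_one) (auto simp: divide_le_eq)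

text \<open>The factor loses at most the proportion k / (s + 1) of top leaves per step.\<close>
lemma safe_factor_step:
  assumes "k \<le> s"
  shows "safe_factor k E s * real (Suc s) \<le> real (Suc s - k) * safe_factor k E (Suc s)"
proof -
  define x where "x = real (Suc s - k)"
  have x1: "1 \<le> x" using assms by (simp add: x_def)
  have xs: "real s - real k = x - 1" "real (Suc s) - real k = x" "real (Suc s) = x + real k"
    using assms by (auto simp: x_def of_nat_diff)
  have b: "(x - 1) ^ k * (x + real k) \<le> x * x ^ k" using shifted_power_bound[OF x1, of k] by simp
  have e1: "safe_factor k E s = (x - 1) ^ k / real E ^ k" unfolding safe_factor_def xs(1) by (simp add: power_divide)
  have e2: "safe_factor k E (Suc s) = x ^ k / real E ^ k" unfolding safe_factor_def xs(2) by (simp add: power_divide)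
  have "safe_factor k E s * real (Suc s) = ((x - 1) ^ k * (x + real k)) / real E ^ k"
    unfolding e1 xs(3) by simp
  also have "\<dots> \<le> (x * x ^ k) / real E ^ k" by (rule divide_right_mono[OF b]) simp
  also have "\<dots> = real (Suc s - k) * safe_factor k E (Suc s)" unfolding e2 x_def by simp
  finally show ?thesis .
qed

lemma safe_factor_mono: "k \<le> s \<Longrightarrow> safe_factor k E s \<le> safe_factor k E (Suc s)"
  unfolding safe_factor_def by (intro power_mono divide_right_mono) auto

lemma hit_bound_le1: "k \<le> s \<Longrightarrow> s \<le> E \<Longrightarrow> hit_bound k E d s \<le> 1"
  unfolding hit_bound_def by (intro mult_le_one safe_factor_le1 progress_prob_nonneg progress_prob_le1)

lemma hit_bound_nonneg: "k \<le> s \<Longrightarrow> 0 \<le> hit_bound k E d s"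
  unfolding hit_bound_def using safe_factor_nonneg progress_prob_nonneg by simp

lemma hit_bound_mono: "k \<le> s \<Longrightarrow> d \<le> d' \<Longrightarrow> hit_bound k E d' s \<le> hit_bound k E d s"
  unfolding hit_bound_def using safe_factor_nonneg progress_prob_antimono by (simp add: mult_left_mono)

lemma hit_bound_base: "hit_bound k E (Suc d) E = 0" by (simp add: hit_bound_def progress_prob_base)

text \<open>Supermartingale inequality: averaging over the s + 1 possible choices (one target leaf
  leading to potential d, at least s + 1 - k inner leaves keeping potential d + 1) dominates the
  bound at time s.\<close>
lemma hit_bound_step:
  assumes "k \<le> s" "s < E"
  shows "hit_bound k E (Suc d) s * real (Suc s) \<le> hit_bound k E d (Suc s) + real (Suc s - k) * hit_bound k E (Suc d) (Suc s)"
proof -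
  let ?P = "safe_factor k E s" and ?P' = "safe_factor k E (Suc s)"
  let ?a = "progress_prob E d (Suc s)" and ?b = "progress_prob E (Suc d) (Suc s)"
  have P0: "0 \<le> ?P" using assms by (simp add: safe_factor_nonneg)
  have a0: "0 \<le> ?a" "0 \<le> ?b" by (rule progress_prob_nonneg)+
  have E1: "real (Suc s) / real E \<le> 1" using assms by simp
  have "hit_bound k E (Suc d) s * real (Suc s) = ?P * ?a * (real (Suc s) / real E) + (?P * real (Suc s)) * ?b"
    unfolding hit_bound_def progress_prob_step[OF assms(2)] by (simp add: algebra_simps)
  also have "\<dots> \<le> ?P * ?a + (real (Suc s - k) * ?P') * ?b"
  proof (rule add_mono)
    have "?P * ?a * (real (Suc s) / real E) \<le> ?P * ?a * 1"
      by (rule mult_left_mono[OF E1]) (use P0 a0 in simp)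
    then show "?P * ?a * (real (Suc s) / real E) \<le> ?P * ?a" by simp
    show "?P * real (Suc s) * ?b \<le> real (Suc s - k) * ?P' * ?b"
      using safe_factor_step[OF assms(1)] a0 by (simp add: mult_right_mono)
  qed
  also have "\<dots> \<le> ?P' * ?a + (real (Suc s - k) * ?P') * ?b"
    using safe_factor_mono[OF assms(1)] a0 by (simp add: mult_right_mono)
  finally show ?thesis unfolding hit_bound_def by (simp add: algebra_simps)
qed

lemma hit_bound_low:
  assumes "2 * k \<le> t" "D \<le> t" "0 < D"
  shows "(1/4) ^ k * (1 / (4 * real D)) ^ D \<le> hit_bound k (2 * t) D t"
proof -
  have t0: "0 < t" using assms by auto
  define l where "l = t div D"
  have l1: "1 \<le> l" using div_le_mono[OF assms(2), of D] assms(3) by (simp add: l_def)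
  have Dl: "D * l \<le> t" by (simp add: l_def)
  have "t < l * D + D" unfolding l_def using mod_less_divisor[OF assms(3), of t] div_mult_mod_eq[of t D]
    by linarith
  moreover have "D \<le> l * D" using l1 by simp
  ultimately have "t \<le> 2 * (l * D)" by linarith
  then have "real t \<le> real (2 * (l * D))" by (simp only: of_nat_le_iff)
  then have "real t \<le> 2 * real D * real l" by (simp add: mult_ac)
  then have q: "1 / (4 * real D) \<le> real l / real (2 * t)" using assms(3) t0
    by (simp add: field_simps)
  have "(1 / (4 * real D)) ^ D \<le> (real l / real (2 * t)) ^ D"
    by (rule power_mono[OF q]) simp
  also have "\<dots> \<le> progress_prob (2 * t) D t" by (rule progress_prob_low) (use Dl t0 in \<open>auto simp: mult.commute\<close>)
  finally have Q: "(1 / (4 * real D)) ^ D \<le> progress_prob (2 * t) D t" .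
  have "1 / 4 \<le> (real t - real k) / real (2 * t)" using assms(1) t0 by (simp add: field_simps)
  then have P: "(1/4) ^ k \<le> safe_factor k (2 * t) t" unfolding safe_factor_def by (rule power_mono) simp
  have "0 \<le> safe_factor k (2 * t) t" by (rule safe_factor_nonneg) (use assms in simp)
  then show ?thesis unfolding hit_bound_def using mult_mono[OF P Q] by simp
qed

fun hit_prob :: "nat \<Rightarrow> (nat \<Rightarrow> nat) \<Rightarrow> nat \<Rightarrow> nat \<Rightarrow> real" where
  "hit_prob k w s 0 = (if k \<le> fringe (grow w s) then 1 else 0)"
| "hit_prob k w s (Suc m) = (if k \<le> fringe (grow w s) then 1
     else (\<Sum>y<Suc s. hit_prob k (w(s := y)) (Suc s) m) / real (Suc s))"

lemma hit_prob_bounds: "0 \<le> hit_prob k w s m \<and> hit_prob k w s m \<le> 1"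
proof (induction m arbitrary: w s)
  case 0 then show ?case by simp
next
  case (Suc m)
  have "(\<Sum>y<Suc s. hit_prob k (w(s := y)) (Suc s) m) \<le> (\<Sum>y<Suc s. 1)"
    by (rule sum_mono) (use Suc in auto)
  moreover have "0 \<le> (\<Sum>y<Suc s. hit_prob k (w(s := y)) (Suc s) m)"
    by (rule sum_nonneg) (use Suc in auto)
  ultimately show ?case by (auto simp: divide_le_eq)
qed

lemma hit_prob_hit: "k \<le> fringe (grow w s) \<Longrightarrow> hit_prob k w s m = 1"
  by (cases m) auto

lemma admissible_update: "admissible w s \<Longrightarrow> y \<le> s \<Longrightarrow> admissible (w(s := y)) (Suc s)"
  by (auto simp: admissible_def less_Suc_eq)

lemma card_nth_filter:
  assumes "distinct xs"
  shows "card {y. y < length xs \<and> P (xs ! y)} = card {x \<in> set xs. P x}"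
proof -
  have "(\<lambda>y. xs ! y) ` {y. y < length xs \<and> P (xs ! y)} = {x \<in> set xs. P x}"
    by (auto simp: in_set_conv_nth)
  moreover have "inj_on (\<lambda>y. xs ! y) {y. y < length xs \<and> P (xs ! y)}"
    using assms by (auto simp: inj_on_def nth_eq_iff_index_eq)
  ultimately show ?thesis by (metis card_image)
qed

lemma choice_classes:
  assumes tree: "binary_tree T" and card: "card (leaves T) = Suc s"
    and kH: "k \<le> height T" and Fk: "fringe T < k"
  defines "xs \<equiv> sorted_list_of_set (leaves T)"
  shows "\<exists>j<Suc s. xs ! j = target_leaf T"
    and "Suc s - k \<le> card {y. y < Suc s \<and> xs ! y \<in> inner_leaves T - {target_leaf T}}"
proof -
  have fin: "finite (leaves T)" using tree by (simp add: binary_tree_def finite_leaves)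
  have xs: "distinct xs" "set xs = leaves T" "length xs = Suc s" using fin card by (auto simp: xs_def)
  note near = inner_depth_near_top[OF tree kH order.strict_trans[OF Fk less_exp]]
  note tgt = target_leaf[OF tree near(1)]
  have "target_leaf T \<in> set xs" using tgt(1) xs(2) by (simp add: inner_leaves_def)
  then show "\<exists>j<Suc s. xs ! j = target_leaf T" using xs(3) by (metis in_set_conv_nth)
  have "card {y. y < Suc s \<and> xs ! y \<in> inner_leaves T - {target_leaf T}}
      = card {x \<in> set xs. x \<in> inner_leaves T - {target_leaf T}}"
    using card_nth_filter[OF xs(1)] xs(3) by simp
  also have "{x \<in> set xs. x \<in> inner_leaves T - {target_leaf T}} = inner_leaves T - {target_leaf T}"
    using xs(2) by (auto simp: inner_leaves_def)
  also have "card \<dots> = Suc s - fringe T - 1"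
    using card_inner_leaves[OF tree] card tgt(1) finite_inner_leaves[OF tree] by (simp add: card_Diff_singleton)
  finally show "Suc s - k \<le> card {y. y < Suc s \<and> xs ! y \<in> inner_leaves T - {target_leaf T}}"
    using Fk by simp
qed

lemma sum_two_classes:
  fixes f :: "nat \<Rightarrow> real"
  assumes "j < n" "a \<le> f j" "A \<subseteq> {..<n} - {j}" "c \<le> card A" "0 \<le> b"
    and "\<And>y. y \<in> A \<Longrightarrow> b \<le> f y" "\<And>y. y < n \<Longrightarrow> 0 \<le> f y"
  shows "a + real c * b \<le> (\<Sum>y<n. f y)"
proof -
  have finA: "finite A" using assms(3) finite_subset by blast
  have "real c * b \<le> real (card A) * b" using assms(4,5) by (simp add: mult_right_mono)
  also have "\<dots> = (\<Sum>y\<in>A. b)" by simp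
  also have "\<dots> \<le> (\<Sum>y\<in>A. f y)" using assms(6) by (rule sum_mono)
  finally have "a + real c * b \<le> f j + (\<Sum>y\<in>A. f y)" using assms(2) by simp
  also have "\<dots> = (\<Sum>y\<in>insert j A. f y)" using finA assms(3) by (subst sum.insert) auto
  also have "\<dots> \<le> (\<Sum>y<n. f y)"
    by (rule sum_mono2) (use assms(1,3,7) in auto)
  finally show ?thesis .
qed

text \<open>hit_bound is antitone in the potential, so an induction hypothesis at the true potential
  gives the bound at any larger potential (unless the fringe has already reached k).\<close>
lemma hit_bound_le_hit_prob_mono:
  assumes "hit_bound k E (potential k (grow w s)) s \<le> hit_prob k w s m" "k \<le> s" "s \<le> E"
    and "fringe (grow w s) < k \<Longrightarrow> potential k (grow w s) \<le> d"
  shows "hit_bound k E d s \<le> hit_prob k w s m"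
proof (cases "k \<le> fringe (grow w s)")
  case True
  then show ?thesis using hit_bound_le1[OF assms(2,3)] hit_prob_hit by metis
next
  case False
  then show ?thesis using assms hit_bound_mono[OF assms(2)] order_trans by (meson not_le)
qed

text \<open>One step of the comparison between hit_bound and hit_prob: average over the next choice,
  where the target split lowers the potential to d and every other inner split keeps it at most
  d + 1, and conclude with the supermartingale inequality hit_bound_step.\<close>
lemma hit_bound_le_hit_prob_step:
  assumes k1: "1 \<le> k" and adm: "admissible w s" and ks: "k \<le> s" and kH: "k \<le> height (grow w s)"
    and sE: "s < E" and Fk: "fringe (grow w s) < k"
    and IH: "\<And>y. y < Suc s \<Longrightarrow>
      hit_bound k E (potential k (grow (w(s := y)) (Suc s))) (Suc s) \<le> hit_prob k (w(s := y)) (Suc s) m"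
  shows "hit_bound k E (potential k (grow w s)) s \<le> hit_prob k w s (Suc m)"
proof -
  let ?T = "grow w s"
  let ?xs = "sorted_list_of_set (leaves ?T)"
  let ?f = "\<lambda>y. hit_prob k (w(s := y)) (Suc s) m"
  have tree: "binary_tree ?T" and card: "card (leaves ?T) = Suc s" using grow_binary_tree[OF adm] by auto
  obtain d where d: "potential k ?T = Suc d"
    using potential_pos[OF Fk] by (cases "potential k ?T") auto
  have child: "hit_bound k E d' (Suc s) \<le> ?f y"
    if y: "y < Suc s" and inner: "?xs ! y \<in> inner_leaves ?T"
      and pot: "fringe (split_leaf ?T (?xs ! y)) < k \<Longrightarrow> potential k (split_leaf ?T (?xs ! y)) \<le> d'"
    for y d'
    using hit_bound_le_hit_prob_mono[OF IH[OF y]] pot ks sE unfolding grow_choice_update by simp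
  obtain j where j: "j < Suc s" "?xs ! j = target_leaf ?T"
    using choice_classes(1)[OF tree card kH Fk] by auto
  define A where "A = {y. y < Suc s \<and> ?xs ! y \<in> inner_leaves ?T - {target_leaf ?T}}"
  have cardA: "Suc s - k \<le> card A" unfolding A_def using choice_classes(2)[OF tree card kH Fk] .
  have target_inner: "target_leaf ?T \<in> inner_leaves ?T"
    using target_leaf(1)[OF tree inner_depth_near_top(1)[OF tree kH order.strict_trans[OF Fk less_exp]]] .
  have "hit_bound k E d (Suc s) \<le> ?f j"
  proof (rule child[OF j(1)])
    show inner: "?xs ! j \<in> inner_leaves ?T" using j target_inner by simp
    assume "fringe (split_leaf ?T (?xs ! j)) < k"
    from potential_split(2)[OF tree k1 kH Fk inner this] j(2)
    show "potential k (split_leaf ?T (?xs ! j)) \<le> d" using d by simp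
  qed
  moreover have "hit_bound k E (Suc d) (Suc s) \<le> ?f y" if y: "y \<in> A" for y
  proof (rule child)
    show "y < Suc s" and inner: "?xs ! y \<in> inner_leaves ?T" using y by (auto simp: A_def)
    assume "fringe (split_leaf ?T (?xs ! y)) < k"
    from potential_split(1)[OF tree k1 kH Fk inner this]
    show "potential k (split_leaf ?T (?xs ! y)) \<le> Suc d" using d by simp
  qed
  ultimately have "hit_bound k E d (Suc s) + real (Suc s - k) * hit_bound k E (Suc d) (Suc s)
      \<le> (\<Sum>y<Suc s. ?f y)"
    using j cardA hit_bound_nonneg[of k "Suc s"] ks hit_prob_bounds
    by (intro sum_two_classes[where A = A]) (auto simp: A_def)
  then have "hit_bound k E (Suc d) s * real (Suc s) \<le> (\<Sum>y<Suc s. ?f y)"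
    using hit_bound_step[OF ks sE, of d] by linarith
  then show ?thesis using Fk d by (simp add: le_divide_eq)
qed

lemma hit_bound_le_hit_prob:
  assumes "1 \<le> k"
  shows "admissible w s \<Longrightarrow> k \<le> s \<Longrightarrow> k \<le> height (grow w s) \<Longrightarrow> s + m = E \<Longrightarrow>
    hit_bound k E (potential k (grow w s)) s \<le> hit_prob k w s m"
proof (induction m arbitrary: w s)
  case 0
  show ?case
  proof (cases "k \<le> fringe (grow w s)")
    case True then show ?thesis using hit_bound_le1[of k s E] 0 by simp
  next
    case False
    then obtain d where "potential k (grow w s) = Suc d"
      using potential_pos[of "grow w s" k] by (cases "potential k (grow w s)") auto
    then show ?thesis using 0 False hit_bound_base[of k E d] by simp
  qed
next
  case (Suc m)
  show ?case
  proof (cases "k \<le> fringe (grow w s)")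
    case True then show ?thesis using hit_bound_le1[of k s E] Suc.prems by simp
  next
    case False
    have IH: "hit_bound k E (potential k (grow (w(s := y)) (Suc s))) (Suc s) \<le> hit_prob k (w(s := y)) (Suc s) m"
      if y: "y < Suc s" for y
    proof (rule Suc.IH)
      have "binary_tree (grow w s)" using grow_binary_tree[OF Suc.prems(1)] by simp
      then have "height (grow w s) \<le> height (grow (w(s := y)) (Suc s))"
        unfolding grow_choice_update by (intro height_mono) (auto simp: split_leaf_def binary_tree_def)
      then show "k \<le> height (grow (w(s := y)) (Suc s))" using Suc.prems(3) by simp
      show "admissible (w(s := y)) (Suc s)" using admissible_update[OF Suc.prems(1)] y by simp
    qed (use Suc.prems in simp_all)
    show ?thesis
      by (rule hit_bound_le_hit_prob_step[OF assms Suc.prems(1-3) _ _ IH]) (use Suc.prems False in auto)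
  qed
qed
text \<open>Finite histories: the admissible choice sequences of length n, padded with zeros.
  All of them are equally likely, which turns probabilities into counting.\<close>
definition histories :: "nat \<Rightarrow> (nat \<Rightarrow> nat) set" where
  "histories n = {u. (\<forall>i<n. u i \<le> i) \<and> (\<forall>i\<ge>n. u i = 0)}"

definition cut_at :: "nat \<Rightarrow> (nat \<Rightarrow> nat) \<Rightarrow> nat \<Rightarrow> nat" where
  "cut_at n v = (\<lambda>i. if i < n then v i else 0)"

definition extensions :: "(nat \<Rightarrow> nat) \<Rightarrow> nat \<Rightarrow> nat \<Rightarrow> (nat \<Rightarrow> nat) set" where
  "extensions w s m = {u \<in> histories (s + m). cut_at s u = w}"

fun num_extensions :: "nat \<Rightarrow> nat \<Rightarrow> nat" where
  "num_extensions s 0 = 1"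
| "num_extensions s (Suc m) = Suc s * num_extensions (Suc s) m"

lemma histories_admissible: "u \<in> histories n \<Longrightarrow> admissible u n"
  by (simp add: histories_def admissible_def)

lemma cut_at_histories: "u \<in> histories (s + m) \<Longrightarrow> cut_at s u \<in> histories s"
  by (auto simp: histories_def cut_at_def)

lemma histories_update: "w \<in> histories s \<Longrightarrow> y \<le> s \<Longrightarrow> w(s := y) \<in> histories (Suc s)"
  by (auto simp: histories_def less_Suc_eq)

lemma grow_cut_at: "r \<le> s \<Longrightarrow> grow (cut_at s u) r = grow u r"
  by (rule grow_cong) (simp add: cut_at_def)

lemma finite_histories: "finite (histories n)"
proof -
  have "finite (PiE_dflt {..<n} 0 (\<lambda>_. {..n}))" by (intro finite_PiE_dflt) auto
  moreover have "histories n \<subseteq> PiE_dflt {..<n} 0 (\<lambda>_. {..n})"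
    by (force simp: histories_def PiE_dflt_def)
  ultimately show ?thesis by (meson finite_subset)
qed

lemma finite_extensions: "finite (extensions w s m)"
  unfolding extensions_def using finite_histories by simp

lemma extensions_0: "w \<in> histories s \<Longrightarrow> extensions w s 0 = {w}"
  by (auto simp: extensions_def histories_def cut_at_def fun_eq_iff) (metis not_le)

lemma extensions_Suc:
  assumes "w \<in> histories s"
  shows "extensions w s (Suc m) = (\<Union>y\<in>{..<Suc s}. extensions (w(s := y)) (Suc s) m)"
proof (intro set_eqI iffI)
  fix u assume u: "u \<in> extensions w s (Suc m)"
  then have uW: "u \<in> histories (Suc s + m)" and c: "cut_at s u = w" by (auto simp: extensions_def)
  have "u s \<le> s" using uW by (simp add: histories_def)
  moreover have "cut_at (Suc s) u = w(s := u s)"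
    using c assms by (auto simp: cut_at_def histories_def fun_eq_iff less_Suc_eq)
  ultimately show "u \<in> (\<Union>y\<in>{..<Suc s}. extensions (w(s := y)) (Suc s) m)"
    using uW by (auto simp: extensions_def)
next
  fix u assume "u \<in> (\<Union>y\<in>{..<Suc s}. extensions (w(s := y)) (Suc s) m)"
  then obtain y where "y < Suc s" "u \<in> extensions (w(s := y)) (Suc s) m" by blast
  then have y: "y \<le> s" "u \<in> histories (Suc s + m)" "cut_at (Suc s) u = w(s := y)"
    by (auto simp: extensions_def)
  have "cut_at s u = w"
  proof
    fix i show "cut_at s u i = w i"
      using fun_cong[OF y(3), of i] assms by (auto simp: cut_at_def histories_def split: if_splits)
  qed
  then show "u \<in> extensions w s (Suc m)" using y by (simp add: extensions_def)
qed

lemma extensions_disjoint_next: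
  "y \<noteq> y' \<Longrightarrow> extensions (w(s := y)) (Suc s) m \<inter> extensions (w(s := y')) (Suc s) m = {}"
  by (auto simp: extensions_def cut_at_def fun_eq_iff)

lemma card_extensions: "w \<in> histories s \<Longrightarrow> card (extensions w s m) = num_extensions s m"
proof (induction m arbitrary: w s)
  case 0 then show ?case by (simp add: extensions_0)
next
  case (Suc m)
  have "card (extensions w s (Suc m)) = (\<Sum>y\<in>{..<Suc s}. card (extensions (w(s := y)) (Suc s) m))"
    unfolding extensions_Suc[OF Suc.prems]
    by (rule card_UN_disjoint) (auto simp: finite_extensions extensions_disjoint_next)
  also have "\<dots> = (\<Sum>y\<in>{..<Suc s}. num_extensions (Suc s) m)"
    by (rule sum.cong) (auto intro!: Suc.IH histories_update[OF Suc.prems] simp: less_Suc_eq_le)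
  finally show ?case by simp
qed

lemma card_histories_split:
  "card {u \<in> histories (s + m). P u} = (\<Sum>w\<in>histories s. card {u \<in> extensions w s m. P u})"
proof -
  have "{u \<in> histories (s + m). P u} = (\<Union>w\<in>histories s. {u \<in> extensions w s m. P u})"
    by (auto simp: extensions_def cut_at_histories)
  then show ?thesis
    by (simp only:) (rule card_UN_disjoint, auto simp: finite_histories finite_extensions extensions_def)
qed

lemma card_histories: "card (histories (s + m)) = card (histories s) * num_extensions s m"
proof -
  have "card (histories (s + m)) = (\<Sum>w\<in>histories s. card (extensions w s m))"
    using card_histories_split[of s m "\<lambda>_. True"] by simp
  also have "\<dots> = (\<Sum>w\<in>histories s. num_extensions s m)" by (rule sum.cong) (simp_all add: card_extensions)
  finally show ?thesis by simp
qed

definition misses :: "nat \<Rightarrow> nat \<Rightarrow> nat \<Rightarrow> (nat \<Rightarrow> nat) \<Rightarrow> bool" where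
  "misses k a b u \<longleftrightarrow> (\<forall>r\<in>{a..b}. fringe (grow u r) < k)"

lemma misses_cut_at: "b \<le> E \<Longrightarrow> misses k a b (cut_at E u) = misses k a b u"
  unfolding misses_def using grow_cut_at by (metis atLeastAtMost_iff order_trans)

lemma misses_extensions_Suc:
  assumes w: "w \<in> histories s" and Fk: "fringe (grow w s) < k"
  shows "{u \<in> extensions w s (Suc m). misses k s (s + Suc m) u} =
    (\<Union>y\<in>{..<Suc s}. {u \<in> extensions (w(s := y)) (Suc s) m. misses k (Suc s) (Suc s + m) u})"
proof -
  have "misses k s (s + Suc m) u \<longleftrightarrow> misses k (Suc s) (Suc s + m) u"
    if "u \<in> extensions w s (Suc m)" for u
  proof -
    have "grow u s = grow w s" using that grow_cut_at[of s s u] by (auto simp: extensions_def)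
    moreover have "{s..s + Suc m} = insert s {Suc s..Suc s + m}" by auto
    ultimately show ?thesis using Fk by (simp add: misses_def)
  qed
  then show ?thesis using extensions_Suc[OF w] by blast
qed

lemma card_misses:
  "w \<in> histories s \<Longrightarrow>
    real (card {u \<in> extensions w s m. misses k s (s + m) u}) = (1 - hit_prob k w s m) * real (num_extensions s m)"
proof (induction m arbitrary: w s)
  case 0
  have "{u \<in> extensions w s 0. misses k s (s + 0) u} = (if k \<le> fringe (grow w s) then {} else {w})"
    using 0 by (auto simp: extensions_0 misses_def)
  then show ?case by simp
next
  case (Suc m)
  show ?case
  proof (cases "k \<le> fringe (grow w s)")
    case True
    have "\<not> misses k s (s + Suc m) u" if "u \<in> extensions w s (Suc m)" for u
      using that grow_cut_at[of s s u] True unfolding extensions_def misses_def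
      by (metis (mono_tags, lifting) atLeastAtMost_iff le_add1 mem_Collect_eq not_le order_refl)
    then have none: "{u \<in> extensions w s (Suc m). misses k s (s + Suc m) u} = {}" by blast
    show ?thesis unfolding none using True by simp
  next
    case False
    then have Fk: "fringe (grow w s) < k" by simp
    let ?M = "\<lambda>y. {u \<in> extensions (w(s := y)) (Suc s) m. misses k (Suc s) (Suc s + m) u}"
    have "card {u \<in> extensions w s (Suc m). misses k s (s + Suc m) u} = (\<Sum>y\<in>{..<Suc s}. card (?M y))"
      unfolding misses_extensions_Suc[OF Suc.prems Fk]
      by (intro card_UN_disjoint)
        (auto simp: finite_extensions, (metis (no_types, lifting) extensions_disjoint_next disjoint_iff)+)
    then have "real (card {u \<in> extensions w s (Suc m). misses k s (s + Suc m) u})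
        = (\<Sum>y\<in>{..<Suc s}. real (card (?M y)))" by simp
    also have "\<dots> = (\<Sum>y\<in>{..<Suc s}. (1 - hit_prob k (w(s := y)) (Suc s) m) * real (num_extensions (Suc s) m))"
      by (rule sum.cong[OF refl], rule Suc.IH, rule histories_update[OF Suc.prems]) auto
    also have "\<dots> = (real (Suc s) - (\<Sum>y<Suc s. hit_prob k (w(s := y)) (Suc s) m)) * real (num_extensions (Suc s) m)"
      by (simp only: sum_distrib_right[symmetric] sum_subtractf) simp
    also have "\<dots> = (1 - hit_prob k w s (Suc m)) * real (num_extensions s (Suc m))"
      using False by (simp add: field_simps)
    finally show ?thesis .
  qed
qed

abbreviation choice_factor :: "nat \<Rightarrow> nat measure" where
  "choice_factor n \<equiv> measure_pmf (pmf_of_set {0..<Suc n})"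

lemma prob_space_choice: "prob_space choice_space"
  unfolding choice_space_def by (rule prob_space_PiM) (simp add: measure_pmf.prob_space_axioms)

lemma space_choice: "space choice_space = UNIV"
  unfolding choice_space_def by (simp add: space_PiM PiE_UNIV_domain)

definition cylinder :: "nat \<Rightarrow> (nat \<Rightarrow> nat) \<Rightarrow> (nat \<Rightarrow> nat) set" where
  "cylinder n u = {v. \<forall>i<n. v i = u i}"

lemma cylinder_emb: "cylinder n u = prod_emb UNIV choice_factor {..<n} (PiE {..<n} (\<lambda>i. {u i}))"
proof -
  have "prod_emb UNIV choice_factor {..<n} (PiE {..<n} (\<lambda>i. {u i})) = Pi UNIV (\<lambda>i. if i \<in> {..<n} then {u i} else UNIV)"
    by (subst prod_emb_PiE) (auto simp: PiE_UNIV_domain Pi_iff split: if_splits)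
  also have "\<dots> = cylinder n u" by (auto simp: cylinder_def Pi_iff split: if_splits)
  finally show ?thesis ..
qed

lemma cylinder_sets: "cylinder n u \<in> sets choice_space"
  unfolding cylinder_emb choice_space_def by (rule sets_PiM_I) auto

lemma emeasure_cylinder:
  assumes "u \<in> histories n"
  shows "emeasure choice_space (cylinder n u) = ennreal (\<Prod>i<n. 1 / real (Suc i))"
proof -
  have "emeasure choice_space (cylinder n u) = (\<Prod>i<n. emeasure (choice_factor i) {u i})"
    unfolding cylinder_emb choice_space_def
    by (rule emeasure_PiM_emb) (auto simp: measure_pmf.prob_space_axioms)
  also have "\<dots> = (\<Prod>i<n. ennreal (1 / real (Suc i)))"
  proof (rule prod.cong[OF refl])
    fix i assume "i \<in> {..<n}"
    then have "u i \<in> {0..<Suc i}" using assms by (auto simp: histories_def le_imp_less_Suc)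
    then show "emeasure (choice_factor i) {u i} = ennreal (1 / real (Suc i))"
      by (simp add: emeasure_pmf_single)
  qed
  also have "\<dots> = ennreal (\<Prod>i<n. 1 / real (Suc i))" by (rule prod_ennreal) simp
  finally show ?thesis .
qed

lemma card_histories_prod: "real (card (histories n)) * (\<Prod>i<n. 1 / real (Suc i)) = 1"
proof (induction n)
  case 0
  have "histories 0 = {\<lambda>_. 0}" by (auto simp: histories_def)
  then show ?case by simp
next
  case (Suc n)
  have "card (histories (Suc n)) = card (histories n) * Suc n" using card_histories[of n 1] by simp
  then show ?case using Suc by (simp add: field_simps)
qed

lemma measure_cylinder: "u \<in> histories n \<Longrightarrow> measure choice_space (cylinder n u) = 1 / real (card (histories n))"
proof -
  assume u: "u \<in> histories n"
  have "measure choice_space (cylinder n u) = (\<Prod>i<n. 1 / real (Suc i))"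
    using emeasure_cylinder[OF u] by (simp add: measure_def prod_nonneg)
  also have "\<dots> = 1 / real (card (histories n))"
  proof -
    have h: "real (card (histories n)) * (\<Prod>i<n. 1 / real (Suc i)) = 1" by (rule card_histories_prod)
    then have "real (card (histories n)) \<noteq> 0" by (metis mult_zero_left zero_neq_one)
    then show ?thesis using h by (simp add: field_simps)
  qed
  finally show ?thesis .
qed

lemma coordinate_event_null:
  assumes "emeasure (choice_factor i) A = 0"
  shows "{v. v i \<in> A} \<in> null_sets choice_space"
proof -
  have emb: "{v. v i \<in> A} = prod_emb UNIV choice_factor {i} (PiE {i} (\<lambda>_. A))"
    by (subst prod_emb_PiE) (auto simp: PiE_UNIV_domain Pi_iff split: if_splits)
  have "prod_emb UNIV choice_factor {i} (PiE {i} (\<lambda>_. A)) \<in> sets choice_space"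
    unfolding choice_space_def by (rule sets_PiM_I) auto
  moreover have "emeasure choice_space (prod_emb UNIV choice_factor {i} (PiE {i} (\<lambda>_. A))) =
      emeasure (choice_factor i) A"
    unfolding choice_space_def by (subst emeasure_PiM_emb) (auto simp: measure_pmf.prob_space_axioms)
  ultimately show ?thesis using assms unfolding emb by (simp add: null_sets_def)
qed

definition out_of_range :: "nat \<Rightarrow> (nat \<Rightarrow> nat) set" where
  "out_of_range n = {v. \<exists>i<n. i < v i}"

lemma out_of_range_null: "out_of_range n \<in> null_sets choice_space"
proof -
  have eq: "out_of_range n = (\<Union>i\<in>{..<n}. {v. v i \<in> {x. i < x}})" by (auto simp: out_of_range_def)
  have "emeasure (choice_factor i) {x. i < x} = 0" for i
  proof -
    have "set_pmf (pmf_of_set {0..<Suc i}) \<inter> {x. i < x} = {}" by auto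
    then have "measure (choice_factor i) {x. i < x} = 0" by (simp only: measure_pmf_zero_iff)
    then show ?thesis by (simp add: measure_pmf.emeasure_eq_measure)
  qed
  then show ?thesis unfolding eq by (intro null_sets_UN' coordinate_event_null) auto
qed

lemma countable_cut_at_fixed: "countable {u :: nat \<Rightarrow> nat. cut_at n u = u}"
proof -
  have "{u :: nat \<Rightarrow> nat. cut_at n u = u} \<subseteq> (\<lambda>xs i. if i < n then xs ! i else 0) ` {xs. length xs = n}"
  proof
    fix u :: "nat \<Rightarrow> nat" assume "u \<in> {u. cut_at n u = u}"
    then have h: "\<And>i. (if i < n then u i else 0) = u i" by (simp add: cut_at_def fun_eq_iff)
    have "u = (\<lambda>i. if i < n then map u [0..<n] ! i else 0)"
    proof
      fix i show "u i = (if i < n then map u [0..<n] ! i else 0)"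
        using h[of i] by (cases "i < n") auto
    qed
    then show "u \<in> (\<lambda>xs i. if i < n then xs ! i else 0) ` {xs. length xs = n}" by force
  qed
  moreover have "countable ((\<lambda>xs i. if i < n then xs ! i else 0) ` {xs :: nat list. length xs = n})"
    by (rule countable_image) simp
  ultimately show ?thesis by (rule countable_subset)
qed

lemma cut_at_sets: "{v. Q (cut_at n v)} \<in> sets choice_space"
proof -
  have "{v. Q (cut_at n v)} = (\<Union>u\<in>{u. cut_at n u = u \<and> Q u}. cylinder n u)"
  proof (intro set_eqI iffI)
    fix v assume "v \<in> {v. Q (cut_at n v)}"
    moreover have "v \<in> cylinder n (cut_at n v)" "cut_at n (cut_at n v) = cut_at n v" by (auto simp: cylinder_def cut_at_def)
    ultimately show "v \<in> (\<Union>u\<in>{u. cut_at n u = u \<and> Q u}. cylinder n u)" by blast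
  next
    fix v assume "v \<in> (\<Union>u\<in>{u. cut_at n u = u \<and> Q u}. cylinder n u)"
    then obtain u where u: "cut_at n u = u" "Q u" "v \<in> cylinder n u" by blast
    have "cut_at n v = u"
    proof
      fix i show "cut_at n v i = u i"
        using u(3) fun_cong[OF u(1), of i] by (cases "i < n") (auto simp: cylinder_def cut_at_def)
    qed
    then show "v \<in> {v. Q (cut_at n v)}" using u by simp
  qed
  also have "\<dots> \<in> sets choice_space"
  proof (rule sets.countable_UN')
    show "countable {u. cut_at n u = u \<and> Q u}" by (rule countable_subset[OF _ countable_cut_at_fixed[of n]]) blast
    show "cylinder n ` {u. cut_at n u = u \<and> Q u} \<subseteq> sets choice_space" using cylinder_sets by blast
  qed
  finally show ?thesis .
qed

lemma measure_cut_le: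
  "measure choice_space {v. Q (cut_at n v)} \<le> real (card {u \<in> histories n. Q u}) / real (card (histories n))"
proof -
  interpret P: prob_space choice_space by (rule prob_space_choice)
  have sub: "{v. Q (cut_at n v)} \<subseteq> (\<Union>u\<in>{u \<in> histories n. Q u}. cylinder n u) \<union> out_of_range n"
  proof
    fix v assume v: "v \<in> {v. Q (cut_at n v)}"
    show "v \<in> (\<Union>u\<in>{u \<in> histories n. Q u}. cylinder n u) \<union> out_of_range n"
    proof (cases "v \<in> out_of_range n")
      case False
      then have "cut_at n v \<in> histories n" unfolding out_of_range_def histories_def cut_at_def by (auto simp: not_less) (meson not_le)
      moreover have "v \<in> cylinder n (cut_at n v)" by (simp add: cylinder_def cut_at_def)
      ultimately show ?thesis using v by blast
    qed simp
  qed
  have fin: "finite {u \<in> histories n. Q u}" using finite_histories by simp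
  have Us: "(\<Union>u\<in>{u \<in> histories n. Q u}. cylinder n u) \<in> sets choice_space"
    by (rule sets.finite_UN[OF fin]) (rule cylinder_sets)
  have Zs: "out_of_range n \<in> sets choice_space" by (rule null_setsD2[OF out_of_range_null])
  have "measure choice_space {v. Q (cut_at n v)} \<le> measure choice_space ((\<Union>u\<in>{u \<in> histories n. Q u}. cylinder n u) \<union> out_of_range n)"
    by (rule P.finite_measure_mono[OF sub]) (rule sets.Un[OF Us Zs])
  also have "\<dots> \<le> measure choice_space (\<Union>u\<in>{u \<in> histories n. Q u}. cylinder n u) + measure choice_space (out_of_range n)"
    by (rule measure_Un_le[OF Us Zs])
  also have "measure choice_space (out_of_range n) = 0" using out_of_range_null by (simp add: measure_def null_setsD1)
  also have "measure choice_space (\<Union>u\<in>{u \<in> histories n. Q u}. cylinder n u) \<le> (\<Sum>u\<in>{u \<in> histories n. Q u}. measure choice_space (cylinder n u))"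
    by (rule measure_subadditive_finite) (use fin cylinder_sets in \<open>auto simp: P.emeasure_eq_measure\<close>)
  also have "\<dots> = (\<Sum>u\<in>{u \<in> histories n. Q u}. 1 / real (card (histories n)))"
    by (rule sum.cong) (auto simp: measure_cylinder)
  finally show ?thesis by simp
qed

definition hit_margin :: "nat \<Rightarrow> real" where
  "hit_margin k = (1/4) ^ k * (1 / (4 * real (potential_cap k))) ^ potential_cap k"

definition start_time :: "nat \<Rightarrow> nat" where
  "start_time k = 2 ^ Suc k + 2 * k + potential_cap k"

lemma hit_margin_pos: "1 \<le> k \<Longrightarrow> 0 < hit_margin k"
proof -
  assume "1 \<le> k"
  then have "0 < potential_cap k" by (simp add: potential_cap_def)
  then have "0 < real (potential_cap k)" by simp
  then show ?thesis unfolding hit_margin_def by (intro mult_pos_pos zero_less_power) auto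
qed

lemma hit_margin_le1: "hit_margin k \<le> 1"
proof -
  have base: "1 / (4 * real (potential_cap k)) \<le> 1"
    by (cases "potential_cap k") (auto simp: field_simps)
  have "(1/4::real) ^ k \<le> 1" by (rule power_le_one) auto
  moreover have "(1 / (4 * real (potential_cap k))) ^ potential_cap k \<le> 1"
    by (rule power_le_one[OF _ base]) simp
  ultimately show ?thesis unfolding hit_margin_def by (simp add: mult_le_one)
qed

text \<open>From any history at time t \<ge> start_time k, the fringe reaches k by time 2t with
  probability at least hit_margin k: the tree is then high enough, and the potential is bounded.\<close>
lemma hit_prob_ge_margin:
  assumes k1: "1 \<le> k" and w: "w \<in> histories t" and t: "start_time k \<le> t"
  shows "hit_margin k \<le> hit_prob k w t t"
proof (cases "k \<le> fringe (grow w t)")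
  case True
  then show ?thesis using hit_prob_hit hit_margin_le1 by simp
next
  case False
  let ?T = "grow w t"
  have adm: "admissible w t" using histories_admissible[OF w] .
  have tree: "binary_tree ?T" and card: "card (leaves ?T) = Suc t" using grow_binary_tree[OF adm] by auto
  have kH: "k \<le> height ?T" using height_ge_of_leaves[OF tree] card t by (simp add: start_time_def)
  have kt: "k \<le> t" "2 * k \<le> t" "potential_cap k \<le> t" using t by (auto simp: start_time_def)
  have "hit_margin k \<le> hit_bound k (2 * t) (potential_cap k) t" unfolding hit_margin_def
    by (rule hit_bound_low) (use kt k1 in \<open>auto simp: potential_cap_def\<close>)
  also have "\<dots> \<le> hit_bound k (2 * t) (potential k ?T) t"
    using potential_le_cap[OF tree kH] False by (intro hit_bound_mono[OF kt(1)]) simp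
  also have "\<dots> \<le> hit_prob k w t t" by (rule hit_bound_le_hit_prob[OF k1 adm kt(1) kH]) simp
  finally show ?thesis .
qed

lemma misses_extensions_split:
  assumes "N \<le> E"
  shows "{u \<in> extensions w E E. misses k N (E + E) u} =
     (if misses k N E w then {u \<in> extensions w E E. misses k E (E + E) u} else {})"
proof -
  have "misses k N (E + E) u \<longleftrightarrow> misses k N E w \<and> misses k E (E + E) u"
    if "u \<in> extensions w E E" for u
  proof -
    have "misses k N E w = misses k N E u"
      using misses_cut_at[of E E k N u] that by (simp add: extensions_def)
    moreover have "{N..E + E} = {N..E} \<union> {E..E + E}" using assms by auto
    ultimately show ?thesis unfolding misses_def by auto
  qed
  then show ?thesis by auto
qed

lemma card_misses_period:
  assumes k1: "1 \<le> k" and w: "w \<in> histories E" and E: "start_time k \<le> E"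
  shows "real (card {u \<in> extensions w E E. misses k E (E + E) u}) \<le> (1 - hit_margin k) * real (num_extensions E E)"
  unfolding card_misses[OF w] using hit_prob_ge_margin[OF k1 w E] by (intro mult_right_mono) auto

lemma card_misses_doubling:
  assumes k1: "1 \<le> k" and N: "start_time k \<le> N"
  shows "real (card {u \<in> histories (N * 2 ^ r). misses k N (N * 2 ^ r) u})
    \<le> (1 - hit_margin k) ^ r * real (card (histories (N * 2 ^ r)))"
proof (induction r)
  case 0
  have "card {u \<in> histories (N * 2 ^ 0). misses k N (N * 2 ^ 0) u} \<le> card (histories (N * 2 ^ 0))"
    by (rule card_mono[OF finite_histories]) auto
  then show ?case by simp
next
  case (Suc r)
  define E where "E = N * 2 ^ r"
  have E2: "N * 2 ^ Suc r = E + E" by (simp add: E_def)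
  have NE: "N \<le> E" by (simp add: E_def)
  let ?q = "(1 - hit_margin k) * real (num_extensions E E)"
  have per_history: "real (card {u \<in> extensions w E E. misses k N (E + E) u}) \<le> (if misses k N E w then ?q else 0)"
    if w: "w \<in> histories E" for w
    unfolding misses_extensions_split[OF NE] using card_misses_period[OF k1 w] N NE by simp
  have "real (card {u \<in> histories (E + E). misses k N (E + E) u}) =
        (\<Sum>w\<in>histories E. real (card {u \<in> extensions w E E. misses k N (E + E) u}))"
    by (simp add: card_histories_split)
  also have "\<dots> \<le> (\<Sum>w\<in>histories E. if misses k N E w then ?q else 0)"
    by (rule sum_mono) (rule per_history)
  also have "\<dots> = real (card {w \<in> histories E. misses k N E w}) * ?q"
    using finite_histories by (simp add: sum.If_cases Int_def)
  also have "\<dots> \<le> ((1 - hit_margin k) ^ r * real (card (histories E))) * ?q"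
    using Suc.IH hit_margin_le1 unfolding E_def by (intro mult_right_mono) auto
  also have "\<dots> = (1 - hit_margin k) ^ Suc r * real (card (histories (E + E)))"
    by (simp add: card_histories)
  finally show ?case unfolding E2 .
qed

lemma grow_sets: "{v. Q (grow v m)} \<in> sets choice_space"
proof -
  have "{v. Q (grow v m)} = {v. Q (grow (cut_at m v) m)}" using grow_cut_at[of m m] by simp
  then show ?thesis using cut_at_sets[of "\<lambda>u. Q (grow u m)" m] by simp
qed

lemma misses_forever_null:
  assumes k1: "1 \<le> k" and N: "start_time k \<le> N"
  shows "{v. \<forall>m\<ge>N. fringe (grow v m) < k} \<in> null_sets choice_space"
proof -
  interpret P: prob_space choice_space by (rule prob_space_choice)
  let ?S = "{v. \<forall>m\<ge>N. fringe (grow v m) < k}"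
  have "?S = (\<Inter>m\<in>{N..}. {v. fringe (grow v m) < k})" by auto
  then have measurable: "?S \<in> sets choice_space"
    by (simp only:) (rule sets.countable_INT'', auto intro: grow_sets simp: space_choice[symmetric])
  have bound: "measure choice_space ?S \<le> (1 - hit_margin k) ^ r" for r
  proof -
    let ?E = "N * 2 ^ r"
    have "?S \<subseteq> {v. misses k N ?E (cut_at ?E v)}"
      unfolding misses_cut_at[OF order_refl] by (auto simp: misses_def)
    then have "measure choice_space ?S \<le> measure choice_space {v. misses k N ?E (cut_at ?E v)}"
      by (intro P.finite_measure_mono cut_at_sets)
    also have "\<dots> \<le> real (card {u \<in> histories ?E. misses k N ?E u}) / real (card (histories ?E))"
      by (rule measure_cut_le)
    also have "\<dots> \<le> (1 - hit_margin k) ^ r"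
    proof (cases "card (histories ?E) = 0")
      case False
      then show ?thesis using card_misses_doubling[OF k1 N, of r] by (simp add: divide_le_eq)
    qed (use hit_margin_le1[of k] in simp)
    finally show ?thesis .
  qed
  have "(\<lambda>r. (1 - hit_margin k) ^ r) \<longlonglongrightarrow> 0"
    by (rule LIMSEQ_power_zero) (use hit_margin_pos[OF k1] hit_margin_le1[of k] in simp)
  then have "measure choice_space ?S \<le> 0"
    by (rule LIMSEQ_le_const) (use bound in blast)
  then have "emeasure choice_space ?S = 0"
    by (simp add: P.emeasure_eq_measure measure_nonneg antisym)
  then show ?thesis using measurable by (simp add: null_sets_def)
qed

lemma AE_fringe_reaches:
  "AE v in choice_space. \<exists>m\<ge>N. k \<le> fringe (grow v m)"
proof (cases "k = 0")
  case False
  have "{v. \<forall>m\<ge>max N (start_time k). fringe (grow v m) < k} \<in> null_sets choice_space"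
    using False by (intro misses_forever_null) auto
  then show ?thesis
    by (rule AE_I') (auto simp: space_choice not_le, meson not_le)
qed (auto intro: AE_I2)

lemma limsup_infinite:
  assumes "\<forall>k N. \<exists>m\<ge>N. k \<le> fringe (grow v m)"
  shows "limsup (\<lambda>n. ereal (real (fringe (bst v n)))) = \<infinity>"
proof -
  have "(SUP m\<in>{n..}. ereal (real (fringe (bst v m)))) = \<infinity>" for n
  proof -
    have "\<exists>i\<in>{n..}. x < ereal (real (fringe (bst v i)))" if x: "x < \<infinity>" for x
    proof -
      obtain j :: nat where j: "x < ereal (real j)"
        using x less_PInf_Ex_of_nat by auto
      obtain m where m: "m \<ge> n" "Suc j \<le> fringe (grow v m)" using assms by blast
      have "fringe (bst v (Suc m)) = fringe (grow v m)" by (simp add: bst_def)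
      then have "x < ereal (real (fringe (bst v (Suc m))))" using j m(2) by (simp add: order.strict_trans)
      then show ?thesis using m(1) by (intro bexI[of _ "Suc m"]) auto
    qed
    then show ?thesis by (simp add: top_ereal_def[symmetric])
  qed
  then show ?thesis by (simp add: limsup_INF_SUP)
qed

theorem proposition3:
  shows "AE v in choice_space.
           limsup (\<lambda>n. ereal (real (fringe (bst v n)))) = \<infinity>"
proof -
  have "AE v in choice_space. \<forall>k N. \<exists>m\<ge>N. k \<le> fringe (grow v m)"
    using AE_fringe_reaches by (simp add: AE_all_countable)
  then show ?thesis by (rule eventually_mono) (rule limsup_infinite)
qed

end
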